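(* Let $p_1,p_2\ge 0$ with $p_1+p_2\le 1$. For every $n\ge 1$, the expected value of the subtree number index of the random polyphenylene chain $RPC(n,p_1,p_2)$ is \[ E(\mathrm{STN}(RPC(n,p_1,p_2)))=\frac{441}{(11+4p_1+p_2)^2}(12+4p_1+p_2)^n+\frac{144p_1+36p_2-45}{11+4p_1+p_2}\,n-\frac{441}{(11+4p_1+p_2)^2}. \]
   Context: For a graph $G$, $\mathrm{STN}(G)$ is the number of nonempty subtrees of $G$ (subgraphs that are trees, single vertices included). A polyphenylene chain with $n$ hexagons consists of hexagons (6-cycles) $H_1,\dots,H_n$, pairwise vertex-disjoint, where for each $i=1,\dots,n-1$ one vertex of $H_i$ is joined to one vertex of $H_{i+1}$ by a single edge (a cut edge), and there are no other edges. For $2\le i\le n-1$, the hexagon $H_i$ has two distinct vertices incident to cut edges (toward $H_{i-1}$ and $H_{i+1}$); their distance in $H_i$ is $1$ (ortho), $2$ (meta) or $3$ (para). The random polyphenylene chain $RPC(n,p_1,p_2)$ is built by stepwise addition of terminal hexagons: for $n\le 2$ the chain is unique, and at each step $i=3,\dots,n$, the new hexagon $H_i$ is attached by a cut edge to a vertex of $H_{i-1}$ that is at distance $1$ (ortho) from the vertex of $H_{i-1}$ attached to $H_{i-2}$ with probability $p_1$, at distance $2$ (meta) with probability $p_2$, and at distance $3$ (para) with probability $1-p_1-p_2$, independently at each step. *)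

theory Defs
  imports Complex_Main 
begin

definition graph_connected :: "'a set \<Rightarrow> 'a set set \<Rightarrow> bool" where
  "graph_connected V E \<longleftrightarrow>
     (\<forall>u\<in>V. \<forall>v\<in>V. (\<lambda>x y. {x, y} \<in> E)\<^sup>*\<^sup>* u v)"

definition graph_acyclic :: "'a set \<Rightarrow> 'a set set \<Rightarrow> bool" where
  "graph_acyclic V E \<longleftrightarrow>
     \<not> (\<exists>cs. length cs \<ge> 3 \<and> distinct cs \<and> set cs \<subseteq> V \<and>
            (\<forall>i<length cs. {cs ! i, cs ! ((i + 1) mod length cs)} \<in> E))"

definition is_tree :: "'a set \<Rightarrow> 'a set set \<Rightarrow> bool" where
  "is_tree V E \<longleftrightarrow> graph_connected V E \<and> graph_acyclic V E"

definition subtrees :: "'a set \<Rightarrow> 'a set set \<Rightarrow> ('a set \<times> 'a set set) set" where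
  "subtrees V E = {(V', E'). V' \<noteq> {} \<and> V' \<subseteq> V \<and> E' \<subseteq> E \<and> (\<forall>e\<in>E'. e \<subseteq> V') \<and> is_tree V' E'}"

definition STN :: "'a set \<Rightarrow> 'a set set \<Rightarrow> nat" where
  "STN V E = card (subtrees V E)"

text \<open>Hexagon i (i < n) has vertices (i,0),...,(i,5) in cyclic order. For i \<ge> 1 the cut edge
  towards hexagon i-1 is at vertex (i,0). The cut edge from hexagon 0 towards hexagon 1 leaves
  vertex (0,0); for 1 \<le> i \<le> n-2 the cut edge towards hexagon i+1 leaves vertex (i, ds!(i-1)),
  which is at distance ds!(i-1) \<in> {1,2,3} (ortho/meta/para) from (i,0).\<close>

definition pc_vertices :: "nat \<Rightarrow> (nat \<times> nat) set" where
  "pc_vertices n = {(i, j). i < n \<and> j < 6}"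

definition pc_exit :: "nat list \<Rightarrow> nat \<Rightarrow> nat" where
  "pc_exit ds i = (if i = 0 then 0 else ds ! (i - 1))"

definition pc_edges :: "nat \<Rightarrow> nat list \<Rightarrow> (nat \<times> nat) set set" where
  "pc_edges n ds =
     {{(i, j), (i, (j + 1) mod 6)} | i j. i < n \<and> j < 6}
   \<union> {{(i, pc_exit ds i), (i + 1, 0)} | i. i + 1 < n}"

text \<open>Probability of attachment type d (1 = ortho, 2 = meta, 3 = para).\<close>
definition type_prob :: "real \<Rightarrow> real \<Rightarrow> nat \<Rightarrow> real" where
  "type_prob p1 p2 d = (if d = 1 then p1 else if d = 2 then p2 else 1 - p1 - p2)"

text \<open>Outcomes: the types of the steps i = 3..n, i.e. lists of length n-2 over {1,2,3};
  steps are independent so an outcome has the product probability.\<close>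
definition rpc_outcomes :: "nat \<Rightarrow> nat list set" where
  "rpc_outcomes n = {ds. length ds = n - 2 \<and> set ds \<subseteq> {1, 2, 3}}"

definition expected_STN_RPC :: "nat \<Rightarrow> real \<Rightarrow> real \<Rightarrow> real" where
  "expected_STN_RPC n p1 p2 =
     (\<Sum>ds\<in>rpc_outcomes n. (\<Prod>d\<leftarrow>ds. type_prob p1 p2 d) * real (STN (pc_vertices n) (pc_edges n ds)))"

end

theory Submission
  imports Defs "HOL-Library.Transitive_Closure_Table"
begin

text \<open>Adding an edge \<open>{a, b}\<close> to a graph creates exactly the subtrees obtained by joining a
  subtree through \<open>a\<close> with a disjoint subtree through \<open>b\<close>; conversely such a tree splits at the
  edge, which is a bridge of every forest. When \<open>{a, b}\<close> links disjoint graphs \<open>A \<ni> a\<close> and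
  \<open>B \<ni> b\<close>, the number \<open>N(G, R)\<close> of subtrees of \<open>G\<close> containing \<open>R \<subseteq> B\<close> therefore satisfies
  \<open>N(A + B, R) = N(A, R) + N(B, R) + N(A, {a}) N(B, {b} \<union> R)\<close>.

  A hexagon is a six-vertex path closed by one edge, so it has 36 subtrees, 21 through each
  vertex, and 16, 13, 12 through two vertices at distance 1, 2, 3. Attaching \<open>H\<^sub>n\<^sub>+\<^sub>1\<close> at its
  vertex \<open>(n, 0)\<close> to the vertex \<open>x\<close> of \<open>H\<^sub>n\<close> gives \<open>STN(G\<^sub>n\<^sub>+\<^sub>1) = STN(G\<^sub>n) + 36 + 21 N(G\<^sub>n, {x})\<close>
  and \<open>N(G\<^sub>n\<^sub>+\<^sub>1, {y}) = 21 + c\<^sub>d N(G\<^sub>n, {x})\<close> for the vertex \<open>y\<close> of \<open>H\<^sub>n\<^sub>+\<^sub>1\<close> at distance \<open>d\<close>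
  from \<open>(n, 0)\<close>. The next attachment type is independent of the chain built so far, so taking
  expectations gives \<open>E\<^sub>n\<^sub>+\<^sub>1 = E\<^sub>n + 36 + 21 A\<^sub>n\<close> and \<open>A\<^sub>n\<^sub>+\<^sub>1 = 21 + (12 + 4 p\<^sub>1 + p\<^sub>2) A\<^sub>n\<close>,
  whose solution is the closed form.\<close>

section \<open>Reachability, cycles and bridges\<close>

abbreviation reach :: "'a set set \<Rightarrow> 'a \<Rightarrow> 'a \<Rightarrow> bool" where
  "reach E \<equiv> (\<lambda>x y. {x, y} \<in> E)\<^sup>*\<^sup>*"

lemma reach_sym: "reach E x y \<Longrightarrow> reach E y x"
proof (induction rule: rtranclp_induct)
  case (step y z)
  have "{z, y} \<in> E" using step(2) by (simp add: insert_commute)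
  then show ?case using step(3) by (meson converse_rtranclp_into_rtranclp)
qed simp

lemma reach_mono: "reach E x y \<Longrightarrow> E \<subseteq> F \<Longrightarrow> reach F x y"
  by (metis (no_types, lifting) mono_rtranclp subsetD)

lemma reach_closed:
  assumes "reach F a v" "a \<in> C" "\<And>x y. {x, y} \<in> F \<Longrightarrow> x \<in> C \<Longrightarrow> y \<in> C"
  shows "v \<in> C"
  using assms by (induction rule: rtranclp_induct) auto

lemma reach_through_edge:
  assumes "reach E a v" and "{a, b} \<in> E"
  shows "reach (E - {{a, b}}) a v \<or> reach (E - {{a, b}}) b v"
  using assms(1)
proof (induction rule: rtranclp_induct)
  case (step y z)
  show ?case
  proof (cases "{y, z} = {a, b}")
    case True
    then have "z = a \<or> z = b" by (auto simp: doubleton_eq_iff)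
    then show ?thesis by auto
  next
    case False
    then have "{y, z} \<in> E - {{a, b}}" using step(2) by simp
    then show ?thesis using step(3) by (meson rtranclp.rtrancl_into_rtrancl)
  qed
qed simp

lemma graph_acyclic_mono:
  "graph_acyclic V E \<Longrightarrow> V' \<subseteq> V \<Longrightarrow> E' \<subseteq> E \<Longrightarrow> graph_acyclic V' E'"
  unfolding graph_acyclic_def by blast

lemma subtrees_mono: "V \<subseteq> W \<Longrightarrow> E \<subseteq> F \<Longrightarrow> subtrees V E \<subseteq> subtrees W F"
  unfolding subtrees_def by auto

lemma finite_subtrees: "finite V \<Longrightarrow> finite E \<Longrightarrow> finite (subtrees V E)"
  by (rule finite_subset[of _ "Pow V \<times> Pow E"]) (auto simp: subtrees_def)

abbreviation cycle_edge :: "'a list \<Rightarrow> nat \<Rightarrow> 'a set" where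
  "cycle_edge cs i \<equiv> {cs ! i, cs ! ((i + 1) mod length cs)}"

definition graph_cycle :: "'a set \<Rightarrow> 'a set set \<Rightarrow> 'a list \<Rightarrow> bool" where
  "graph_cycle V E cs \<longleftrightarrow>
     3 \<le> length cs \<and> distinct cs \<and> set cs \<subseteq> V \<and> (\<forall>i<length cs. cycle_edge cs i \<in> E)"

lemma graph_acyclic_iff: "graph_acyclic V E \<longleftrightarrow> (\<forall>cs. \<not> graph_cycle V E cs)"
  unfolding graph_acyclic_def graph_cycle_def by blast

lemma graph_acyclic_no_edges: "graph_acyclic V {}"
  unfolding graph_acyclic_iff graph_cycle_def by (auto intro!: exI[of _ 0])

lemma subtrees_singleton: "subtrees {v} {} = {({v}, {})}"
proof -
  have "graph_connected {v} {}" unfolding graph_connected_def by simp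
  then show ?thesis using graph_acyclic_no_edges by (auto simp: subtrees_def is_tree_def)
qed

lemma add_mod_neq_self:
  fixes k d L :: nat
  assumes "k < L" and "0 < d" and "d < L"
  shows "(k + d) mod L \<noteq> k"
proof (cases "k + d < L")
  case False
  then have "(k + d) mod L = k + d - L" using assms by (simp add: le_mod_geq)
  then show ?thesis using assms False by linarith
qed (use assms in simp)

lemma cycle_vertices_within:
  assumes "\<forall>i<length cs. cycle_edge cs i \<in> E" and "\<forall>f\<in>E. f \<subseteq> V"
  shows "set cs \<subseteq> V"
proof
  fix v assume "v \<in> set cs"
  then obtain i where "i < length cs" "v = cs ! i" by (auto simp: in_set_conv_nth)
  then show "v \<in> V" using assms by blast
qed

lemma cycle_edge_index_unique:
  assumes dist: "distinct cs" and len: "3 \<le> length cs"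
    and i: "i < length cs" and k: "k < length cs" and eq: "cycle_edge cs i = cycle_edge cs k"
  shows "i = k"
proof (rule ccontr)
  let ?L = "length cs"
  assume "i \<noteq> k"
  then have "cs ! i \<noteq> cs ! k" using nth_eq_iff_index_eq[OF dist i k] by simp
  with eq have "cs ! i = cs ! ((k + 1) mod ?L)" "cs ! ((i + 1) mod ?L) = cs ! k"
    by (auto simp: doubleton_eq_iff)
  moreover have "0 < ?L" using k by linarith
  then have "(k + 1) mod ?L < ?L" "(i + 1) mod ?L < ?L" by simp_all
  ultimately have "i = (k + 1) mod ?L" "(i + 1) mod ?L = k"
    using nth_eq_iff_index_eq[OF dist] i k by metis+
  then have "(k + 2) mod ?L = k" by (simp add: mod_Suc_eq)
  moreover have "(k + 2) mod ?L \<noteq> k" by (rule add_mod_neq_self[OF k]) (use len in simp_all)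
  ultimately show False by blast
qed

lemma cyclic_walk:
  assumes i: "i < length cs"
    and steps: "\<And>k. k < length cs \<Longrightarrow> k \<noteq> i \<Longrightarrow> R (cs ! k) (cs ! ((k + 1) mod length cs))"
  shows "R\<^sup>*\<^sup>* (cs ! ((i + 1) mod length cs)) (cs ! i)"
proof -
  let ?L = "length cs"
  have walk: "R\<^sup>*\<^sup>* (cs ! ((i + 1) mod ?L)) (cs ! ((i + 1 + j) mod ?L))" if "j < ?L" for j
    using that
  proof (induction j)
    case (Suc j)
    let ?k = "(i + 1 + j) mod ?L"
    have "?k \<noteq> i" using add_mod_neq_self[OF i, of "Suc j"] Suc.prems by simp
    moreover have "?k < ?L" by (rule mod_less_divisor) (use i in linarith)
    ultimately have "R (cs ! ?k) (cs ! ((?k + 1) mod ?L))" using steps by blast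
    moreover have "(?k + 1) mod ?L = (i + 1 + Suc j) mod ?L" by (simp add: mod_Suc_eq)
    ultimately show ?case using Suc.IH Suc.prems by (simp add: rtranclp.rtrancl_into_rtrancl)
  qed simp
  have "i + 1 + (?L - 1) = i + ?L" using i by simp
  then have "(i + 1 + (?L - 1)) mod ?L = i" using i by simp
  then show ?thesis using walk[of "?L - 1"] i by simp
qed

lemma graph_acyclic_insert:
  assumes acyc: "graph_acyclic V E" and unreach: "\<not> reach E a b"
  shows "graph_acyclic V (insert {a, b} E)"
  unfolding graph_acyclic_iff
proof (intro allI notI)
  fix cs assume "graph_cycle V (insert {a, b} E) cs"
  then have len: "3 \<le> length cs" and dist: "distinct cs" and sub: "set cs \<subseteq> V"
    and cyc: "\<forall>i<length cs. cycle_edge cs i \<in> insert {a, b} E"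
    unfolding graph_cycle_def by auto
  show False
  proof (cases "\<exists>i<length cs. cycle_edge cs i = {a, b}")
    case True
    then obtain i where i: "i < length cs" and e: "cycle_edge cs i = {a, b}" by blast
    have walk: "reach E (cs ! ((i + 1) mod length cs)) (cs ! i)"
    proof (rule cyclic_walk[OF i])
      fix k assume k: "k < length cs" "k \<noteq> i"
      then have "cycle_edge cs k \<noteq> {a, b}"
        using cycle_edge_index_unique[OF dist len i k(1)] e by fastforce
      then show "cycle_edge cs k \<in> E" using cyc k(1) by blast
    qed
    have "cs ! i = a \<and> cs ! ((i + 1) mod length cs) = b \<or>
        cs ! i = b \<and> cs ! ((i + 1) mod length cs) = a"
      using e by (simp add: doubleton_eq_iff)
    then show False
    proof
      assume "cs ! i = a \<and> cs ! ((i + 1) mod length cs) = b"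
      then have "reach E b a" using walk by simp
      then show False using unreach reach_sym[of E b a] by simp
    next
      assume "cs ! i = b \<and> cs ! ((i + 1) mod length cs) = a"
      then show False using walk unreach by simp
    qed
  next
    case False
    then have "graph_cycle V E cs" using len dist sub cyc unfolding graph_cycle_def by blast
    then show False using acyc unfolding graph_acyclic_iff by blast
  qed
qed

lemma cycle_edges_on_side:
  assumes disj: "V1 \<inter> V2 = {}" and E1: "\<forall>f\<in>E1. f \<subseteq> V1" and E2: "\<forall>f\<in>E2. f \<subseteq> V2"
    and cyc: "\<forall>i<length cs. cycle_edge cs i \<in> E1 \<union> E2" and start: "cs ! 0 \<in> V1"
  shows "\<forall>i<length cs. cycle_edge cs i \<in> E1"
proof -
  have side: "cycle_edge cs i \<in> E1" if "i < length cs" "cs ! i \<in> V1" for i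
    using cyc that disj E2 by blast
  have "cs ! j \<in> V1" if "j < length cs" for j
    using that
  proof (induction j)
    case (Suc j)
    then have "{cs ! j, cs ! Suc j} \<in> E1" using side[of j] by simp
    then show ?case using E1 by blast
  qed (use start in simp)
  then show ?thesis using side by blast
qed

lemma graph_acyclic_Un:
  assumes acyc1: "graph_acyclic V1 E1" and acyc2: "graph_acyclic V2 E2" and disj: "V1 \<inter> V2 = {}"
    and E1: "\<forall>f\<in>E1. f \<subseteq> V1" and E2: "\<forall>f\<in>E2. f \<subseteq> V2"
  shows "graph_acyclic (V1 \<union> V2) (E1 \<union> E2)"
  unfolding graph_acyclic_iff
proof (intro allI notI)
  fix cs assume "graph_cycle (V1 \<union> V2) (E1 \<union> E2) cs"
  then have len: "3 \<le> length cs" and dist: "distinct cs" and sub: "set cs \<subseteq> V1 \<union> V2"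
    and cyc: "\<forall>i<length cs. cycle_edge cs i \<in> E1 \<union> E2"
    unfolding graph_cycle_def by auto
  have "cs ! 0 \<in> set cs" using len by (intro nth_mem) linarith
  then have "cs ! 0 \<in> V1 \<union> V2" using sub by blast
  then show False
  proof
    assume "cs ! 0 \<in> V1"
    then have "\<forall>i<length cs. cycle_edge cs i \<in> E1" by (rule cycle_edges_on_side[OF disj E1 E2 cyc])
    then have "graph_cycle V1 E1 cs"
      using len dist cycle_vertices_within[OF _ E1] unfolding graph_cycle_def by blast
    then show False using acyc1 unfolding graph_acyclic_iff by blast
  next
    assume "cs ! 0 \<in> V2"
    moreover have "V2 \<inter> V1 = {}" "\<forall>i<length cs. cycle_edge cs i \<in> E2 \<union> E1" using disj cyc by blast+
    ultimately have "\<forall>i<length cs. cycle_edge cs i \<in> E2"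
      using cycle_edges_on_side[of V2 V1 E2 E1 cs] E1 E2 by blast
    then have "graph_cycle V2 E2 cs"
      using len dist cycle_vertices_within[OF _ E2] unfolding graph_cycle_def by blast
    then show False using acyc2 unfolding graph_acyclic_iff by blast
  qed
qed

text \<open>In a forest every edge is a bridge: another path between its endpoints, shortened to a
  simple one, would close a cycle with it.\<close>

lemma graph_acyclic_edge_bridge:
  assumes acyc: "graph_acyclic V E" and e: "{a, b} \<in> E" and ab: "a \<noteq> b"
    and sub: "\<forall>f\<in>E. f \<subseteq> V"
  shows "\<not> reach (E - {{a, b}}) a b"
proof
  let ?R = "\<lambda>x y. {x, y} \<in> E - {{a, b}}"
  assume "reach (E - {{a, b}}) a b"
  then obtain xs0 where "rtrancl_path ?R a xs0 b" using rtranclp_eq_rtrancl_path by metis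
  then obtain xs where p: "rtrancl_path ?R a xs b" and d: "distinct (a # xs)"
    using rtrancl_path_distinct by metis
  have ne: "xs \<noteq> []" using p ab by (auto elim: rtrancl_path.cases)
  have lastb: "last xs = b" using rtrancl_path_last[OF p ne] .
  have nth: "{(a # xs) ! i, xs ! i} \<in> E - {{a, b}}" if "i < length xs" for i
    using rtrancl_path_nth[OF p that] by simp
  have len: "length xs \<ge> 2"
  proof (rule ccontr)
    assume "\<not> length xs \<ge> 2"
    then have "length xs = 1" using ne by (simp add: not_le less_2_cases_iff)
    then have "xs ! 0 = b" using lastb ne by (simp add: last_conv_nth)
    then show False using nth[of 0] \<open>length xs = 1\<close> by simp
  qed
  have cyc: "\<forall>i<length (a # xs). cycle_edge (a # xs) i \<in> E"
  proof (intro allI impI)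
    fix i assume i: "i < length (a # xs)"
    show "cycle_edge (a # xs) i \<in> E"
    proof (cases "i < length xs")
      case True
      then show ?thesis using nth[OF True] by simp
    next
      case False
      then have "i = length xs" using i by simp
      then have "(a # xs) ! i = b" "(i + 1) mod length (a # xs) = 0"
        using lastb ne by (simp_all add: last_conv_nth)
      then show ?thesis using e by (simp add: insert_commute)
    qed
  qed
  moreover have "set (a # xs) \<subseteq> V" by (rule cycle_vertices_within[OF cyc sub])
  ultimately have "graph_cycle V E (a # xs)" using d len unfolding graph_cycle_def by simp
  then show False using acyc unfolding graph_acyclic_iff by blast
qed

section \<open>Subtrees after inserting an edge\<close>

definition subtrees_containing :: "'a set \<Rightarrow> 'a set set \<Rightarrow> 'a set \<Rightarrow> ('a set \<times> 'a set set) set" where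
  "subtrees_containing V E R = {T \<in> subtrees V E. R \<subseteq> fst T}"

definition subtree_join :: "'a set \<Rightarrow> ('a set \<times> 'a set set) \<times> ('a set \<times> 'a set set) \<Rightarrow> 'a set \<times> 'a set set" where
  "subtree_join e p = (fst (fst p) \<union> fst (snd p), insert e (snd (fst p) \<union> snd (snd p)))"

definition rooted_subtree_pairs ::
    "'a set \<Rightarrow> 'a set set \<Rightarrow> 'a \<Rightarrow> 'a \<Rightarrow> (('a set \<times> 'a set set) \<times> ('a set \<times> 'a set set)) set" where
  "rooted_subtree_pairs V E a b = {(T1, T2). T1 \<in> subtrees V E \<and> T2 \<in> subtrees V E \<and>
     a \<in> fst T1 \<and> b \<in> fst T2 \<and> fst T1 \<inter> fst T2 = {}}"

definition edge_component :: "'a set set \<Rightarrow> 'a \<Rightarrow> 'a set \<times> 'a set set" where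
  "edge_component F c = ({v. reach F c v}, {f \<in> F. f \<subseteq> {v. reach F c v}})"

definition subtree_split :: "'a \<Rightarrow> 'a \<Rightarrow> 'a set \<times> 'a set set \<Rightarrow> ('a set \<times> 'a set set) \<times> ('a set \<times> 'a set set)" where
  "subtree_split a b T = (edge_component (snd T - {{a, b}}) a, edge_component (snd T - {{a, b}}) b)"

lemma reach_Un_stays:
  assumes disj: "V1 \<inter> V2 = {}" and E1: "\<forall>f\<in>E1. f \<subseteq> V1" and E2: "\<forall>f\<in>E2. f \<subseteq> V2"
    and "reach (E1 \<union> E2) x y" and "x \<in> V1"
  shows "y \<in> V1"
proof (rule reach_closed[OF assms(4,5)])
  fix u v assume uv: "{u, v} \<in> E1 \<union> E2" and u: "u \<in> V1"
  have "{u, v} \<notin> E2"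
  proof
    assume "{u, v} \<in> E2"
    then have "u \<in> V2" using E2 by blast
    then show False using u disj by blast
  qed
  then show "v \<in> V1" using uv E1 by auto
qed

lemma reach_within:
  assumes "reach F c v" and "c \<in> V" and "\<forall>f\<in>F. f \<subseteq> V"
  shows "v \<in> V"
  using assms(1,2) by (rule reach_closed) (use assms(3) in blast)

lemma graph_connected_join:
  assumes con1: "graph_connected V1 E1" and con2: "graph_connected V2 E2"
    and a: "a \<in> V1" and b: "b \<in> V2"
  shows "graph_connected (V1 \<union> V2) (insert {a, b} (E1 \<union> E2))"
proof -
  let ?E = "insert {a, b} (E1 \<union> E2)"
  have from_a: "reach ?E a v" if "v \<in> V1 \<union> V2" for v
  proof (cases "v \<in> V1")
    case True
    then have "reach E1 a v" using con1 a unfolding graph_connected_def by blast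
    then show ?thesis by (rule reach_mono) blast
  next
    case False
    then have "reach E2 b v" using that con2 b unfolding graph_connected_def by blast
    then have "reach ?E b v" by (rule reach_mono) blast
    moreover have "{a, b} \<in> ?E" by simp
    ultimately show ?thesis by (meson converse_rtranclp_into_rtranclp)
  qed
  show ?thesis unfolding graph_connected_def
  proof (intro ballI)
    fix u v assume "u \<in> V1 \<union> V2" "v \<in> V1 \<union> V2"
    then have "reach ?E u a" "reach ?E a v" using reach_sym[OF from_a] from_a by blast+
    then show "reach ?E u v" by (rule rtranclp_trans)
  qed
qed

lemma reach_edge_component: "reach F c u \<Longrightarrow> reach (snd (edge_component F c)) c u"
proof (induction rule: rtranclp_induct)
  case (step y z)
  have "reach F c z" using step(1,2) by (rule rtranclp.rtrancl_into_rtrancl)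
  then have "{y, z} \<in> snd (edge_component F c)" using step(1,2) by (auto simp: edge_component_def)
  with step(3) show ?case by (rule rtranclp.rtrancl_into_rtrancl)
qed simp

lemma edge_component_subtree:
  assumes c: "c \<in> V'" and "V' \<subseteq> V" "F \<subseteq> E" and sub: "\<forall>f\<in>F. f \<subseteq> V'"
    and acyc: "graph_acyclic V' F"
  shows "edge_component F c \<in> subtrees V E"
proof -
  obtain W G where WG: "edge_component F c = (W, G)" by fastforce
  have W: "W = {v. reach F c v}" and G: "G = {f \<in> F. f \<subseteq> W}" using WG by (auto simp: edge_component_def)
  have "W \<subseteq> V'" unfolding W using reach_within[OF _ c sub] by blast
  moreover have "c \<in> W" unfolding W by simp
  moreover have "graph_connected W G" unfolding graph_connected_def
  proof (intro ballI)
    fix u v assume "u \<in> W" "v \<in> W"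
    then have "reach G c u" "reach G c v" using reach_edge_component[of F c] WG W by auto
    then show "reach G u v" using reach_sym[of G c u] by (meson rtranclp_trans)
  qed
  moreover have "graph_acyclic W G" by (rule graph_acyclic_mono[OF acyc \<open>W \<subseteq> V'\<close>]) (simp add: G)
  ultimately show ?thesis
    using WG G assms(2,3) unfolding subtrees_def is_tree_def by auto
qed

lemma edge_component_of_disjoint_subtrees:
  assumes T1: "(V1, E1) \<in> subtrees V E" and T2: "(V2, E2) \<in> subtrees V E"
    and disj: "V1 \<inter> V2 = {}" and c: "c \<in> V1" and ne: "{} \<notin> E"
  shows "edge_component (E1 \<union> E2) c = (V1, E1)"
proof -
  have E1: "\<forall>f\<in>E1. f \<subseteq> V1" and con1: "graph_connected V1 E1"
    and E2: "\<forall>f\<in>E2. f \<subseteq> V2" and "E2 \<subseteq> E"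
    using T1 T2 by (auto simp: subtrees_def is_tree_def)
  have verts: "{v. reach (E1 \<union> E2) c v} = V1"
  proof
    show "{v. reach (E1 \<union> E2) c v} \<subseteq> V1" using reach_Un_stays[OF disj E1 E2] c by blast
    show "V1 \<subseteq> {v. reach (E1 \<union> E2) c v}"
    proof
      fix v assume "v \<in> V1"
      then have "reach E1 c v" using con1 c unfolding graph_connected_def by blast
      then have "reach (E1 \<union> E2) c v" by (rule reach_mono) blast
      then show "v \<in> {v. reach (E1 \<union> E2) c v}" by simp
    qed
  qed
  have "f \<notin> E2" if "f \<subseteq> V1" for f
  proof
    assume "f \<in> E2"
    then have "f \<subseteq> V1 \<inter> V2" "f \<in> E" using that E2 \<open>E2 \<subseteq> E\<close> by auto
    then show False using disj ne by auto
  qed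
  then have "{f \<in> E1 \<union> E2. f \<subseteq> V1} = E1" using E1 by auto
  then show ?thesis unfolding edge_component_def verts by simp
qed

lemma subtree_join_mem:
  assumes p: "p \<in> rooted_subtree_pairs V E a b"
  shows "subtree_join {a, b} p \<in> subtrees V (insert {a, b} E)"
proof -
  obtain V1 E1 V2 E2 where pp: "p = ((V1, E1), (V2, E2))" by (metis prod.collapse)
  have T1: "(V1, E1) \<in> subtrees V E" and T2: "(V2, E2) \<in> subtrees V E"
    and a: "a \<in> V1" and b: "b \<in> V2" and disj: "V1 \<inter> V2 = {}"
    using p pp by (auto simp: rooted_subtree_pairs_def)
  have E1: "\<forall>f\<in>E1. f \<subseteq> V1" and E2: "\<forall>f\<in>E2. f \<subseteq> V2"
    and tree1: "is_tree V1 E1" and tree2: "is_tree V2 E2"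
    using T1 T2 by (auto simp: subtrees_def)
  have "\<not> reach (E1 \<union> E2) a b" using reach_Un_stays[OF disj E1 E2 _ a] b disj by auto
  moreover have "graph_acyclic (V1 \<union> V2) (E1 \<union> E2)"
    using graph_acyclic_Un[OF _ _ disj E1 E2] tree1 tree2 by (simp add: is_tree_def)
  ultimately have "graph_acyclic (V1 \<union> V2) (insert {a, b} (E1 \<union> E2))"
    by (simp add: graph_acyclic_insert)
  moreover have "graph_connected (V1 \<union> V2) (insert {a, b} (E1 \<union> E2))"
    using graph_connected_join[OF _ _ a b] tree1 tree2 by (simp add: is_tree_def)
  ultimately show ?thesis
    using pp T1 T2 a b E1 E2 unfolding subtree_join_def subtrees_def is_tree_def by auto
qed

lemma subtree_split_mem:
  assumes T: "T \<in> subtrees V (insert {a, b} E)" and e: "{a, b} \<in> snd T" and ab: "a \<noteq> b"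
  shows "subtree_split a b T \<in> rooted_subtree_pairs V E a b"
proof -
  obtain V' E' where TT: "T = (V', E')" by fastforce
  have "V' \<subseteq> V" "E' \<subseteq> insert {a, b} E" and sub: "\<forall>f\<in>E'. f \<subseteq> V'"
    and acyc: "graph_acyclic V' E'"
    using T TT by (auto simp: subtrees_def is_tree_def)
  define F where "F = E' - {{a, b}}"
  have F: "F \<subseteq> E" "\<forall>f\<in>F. f \<subseteq> V'"
    using \<open>E' \<subseteq> insert {a, b} E\<close> sub unfolding F_def by blast+
  have "graph_acyclic V' F" by (rule graph_acyclic_mono[OF acyc]) (auto simp: F_def)
  have "a \<in> V'" "b \<in> V'" using sub e TT by auto
  then have comps: "edge_component F a \<in> subtrees V E" "edge_component F b \<in> subtrees V E"
    using edge_component_subtree[OF _ \<open>V' \<subseteq> V\<close> F \<open>graph_acyclic V' F\<close>] by blast+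
  have "\<not> reach F a b"
    using graph_acyclic_edge_bridge[OF acyc _ ab sub] e TT unfolding F_def by simp
  have "fst (edge_component F a) \<inter> fst (edge_component F b) = {}"
  proof (rule ccontr)
    assume "fst (edge_component F a) \<inter> fst (edge_component F b) \<noteq> {}"
    then obtain v where "reach F a v" "reach F b v" by (auto simp: edge_component_def)
    then have "reach F a b" using reach_sym[of F b v] by (meson rtranclp_trans)
    then show False using \<open>\<not> reach F a b\<close> by blast
  qed
  then show ?thesis
    using comps TT unfolding subtree_split_def rooted_subtree_pairs_def F_def
    by (simp add: edge_component_def)
qed

lemma subtree_split_join:
  assumes p: "p \<in> rooted_subtree_pairs V E a b" and e: "{a, b} \<notin> E" and ne: "{} \<notin> E"
  shows "subtree_split a b (subtree_join {a, b} p) = p"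
proof -
  obtain V1 E1 V2 E2 where pp: "p = ((V1, E1), (V2, E2))" by (metis prod.collapse)
  have T1: "(V1, E1) \<in> subtrees V E" and T2: "(V2, E2) \<in> subtrees V E"
    and a: "a \<in> V1" and b: "b \<in> V2" and disj: "V1 \<inter> V2 = {}"
    using p pp by (auto simp: rooted_subtree_pairs_def)
  have "E1 \<subseteq> E" "E2 \<subseteq> E" using T1 T2 by (auto simp: subtrees_def)
  then have "snd (subtree_join {a, b} p) - {{a, b}} = E1 \<union> E2"
    using pp e by (auto simp: subtree_join_def)
  moreover have "edge_component (E1 \<union> E2) a = (V1, E1)"
    by (rule edge_component_of_disjoint_subtrees[OF T1 T2 disj a ne])
  moreover have "edge_component (E2 \<union> E1) b = (V2, E2)"
    using edge_component_of_disjoint_subtrees[OF T2 T1 _ b ne] disj by blast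
  ultimately show ?thesis using pp by (simp add: subtree_split_def Un_commute)
qed

lemma subtree_join_split:
  assumes T: "T \<in> subtrees V (insert {a, b} E)" and e: "{a, b} \<in> snd T"
    and doubletons: "\<forall>f\<in>E. \<exists>x y. f = {x, y}"
  shows "subtree_join {a, b} (subtree_split a b T) = T"
proof -
  obtain V' E' where TT: "T = (V', E')" by fastforce
  have "E' \<subseteq> insert {a, b} E" and sub: "\<forall>f\<in>E'. f \<subseteq> V'" and con: "graph_connected V' E'"
    using T TT by (auto simp: subtrees_def is_tree_def)
  define F where "F = E' - {{a, b}}"
  define W1 W2 where "W1 = {v. reach F a v}" and "W2 = {v. reach F b v}"
  have ab: "a \<in> V'" "b \<in> V'" "{a, b} \<in> E'" using sub e TT by auto
  have subF: "\<forall>f\<in>F. f \<subseteq> V'" using sub F_def by blast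
  have "W1 \<subseteq> V'" unfolding W1_def using reach_within[OF _ ab(1) subF] by blast
  moreover have "W2 \<subseteq> V'" unfolding W2_def using reach_within[OF _ ab(2) subF] by blast
  moreover have "V' \<subseteq> W1 \<union> W2"
  proof
    fix v assume "v \<in> V'"
    then have "reach E' a v" using con ab unfolding graph_connected_def by blast
    then show "v \<in> W1 \<union> W2"
      using reach_through_edge[OF _ ab(3)] unfolding W1_def W2_def F_def by simp
  qed
  ultimately have verts: "W1 \<union> W2 = V'" by blast
  have "F \<subseteq> {f \<in> F. f \<subseteq> W1} \<union> {f \<in> F. f \<subseteq> W2}"
  proof
    fix f assume f: "f \<in> F"
    then have "f \<in> E" using \<open>E' \<subseteq> insert {a, b} E\<close> F_def by auto
    then obtain x y where xy: "f = {x, y}" using doubletons by blast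
    have "x \<in> W1 \<union> W2" using f xy sub verts F_def by blast
    moreover have "{x, y} \<in> F" using f xy by simp
    then have "x \<in> W1 \<Longrightarrow> y \<in> W1" "x \<in> W2 \<Longrightarrow> y \<in> W2"
      unfolding W1_def W2_def by (simp_all add: rtranclp.rtrancl_into_rtrancl)
    ultimately show "f \<in> {f \<in> F. f \<subseteq> W1} \<union> {f \<in> F. f \<subseteq> W2}"
      using f xy by blast
  qed
  then have "insert {a, b} ({f \<in> F. f \<subseteq> W1} \<union> {f \<in> F. f \<subseteq> W2}) = E'"
    using ab(3) unfolding F_def by auto
  then show ?thesis
    using verts TT unfolding subtree_join_def subtree_split_def edge_component_def W1_def W2_def F_def
    by simp
qed

lemma bij_betw_subtree_join:
  assumes ab: "a \<noteq> b" and e: "{a, b} \<notin> E" and doubletons: "\<forall>f\<in>E. \<exists>x y. f = {x, y}"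
  shows "bij_betw (subtree_join {a, b}) (rooted_subtree_pairs V E a b)
           {T \<in> subtrees V (insert {a, b} E). {a, b} \<in> snd T}"
proof (rule bij_betw_byWitness[where f' = "subtree_split a b"])
  have "{} \<notin> E" using doubletons by auto
  then show "\<forall>p\<in>rooted_subtree_pairs V E a b. subtree_split a b (subtree_join {a, b} p) = p"
    using subtree_split_join[OF _ e] by simp
  show "\<forall>T\<in>{T \<in> subtrees V (insert {a, b} E). {a, b} \<in> snd T}.
          subtree_join {a, b} (subtree_split a b T) = T"
  proof
    fix T assume "T \<in> {T \<in> subtrees V (insert {a, b} E). {a, b} \<in> snd T}"
    then show "subtree_join {a, b} (subtree_split a b T) = T"
      using subtree_join_split[OF _ _ doubletons] by blast
  qed
  show "subtree_join {a, b} ` rooted_subtree_pairs V E a b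
          \<subseteq> {T \<in> subtrees V (insert {a, b} E). {a, b} \<in> snd T}"
    using subtree_join_mem by (auto simp: subtree_join_def)
  show "subtree_split a b ` {T \<in> subtrees V (insert {a, b} E). {a, b} \<in> snd T}
          \<subseteq> rooted_subtree_pairs V E a b"
    using subtree_split_mem[OF _ _ ab] by auto
qed

lemma subtree_vertices_subset: "T \<in> subtrees V E \<Longrightarrow> fst T \<subseteq> V"
  unfolding subtrees_def by auto

lemma finite_subtrees_containing:
  assumes "finite V" "finite E"
  shows "finite (subtrees_containing V E R)"
  unfolding subtrees_containing_def by (rule finite_subset[OF _ finite_subtrees[OF assms]]) auto

lemma subtrees_insert_edge:
  assumes "a \<noteq> b" and "{a, b} \<notin> E" and "\<forall>f\<in>E. \<exists>x y. f = {x, y}"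
  shows "subtrees V (insert {a, b} E) = subtrees V E \<union> subtree_join {a, b} ` rooted_subtree_pairs V E a b"
proof -
  have "subtrees V (insert {a, b} E) =
      subtrees V E \<union> {T \<in> subtrees V (insert {a, b} E). {a, b} \<in> snd T}"
    by (auto simp: subtrees_def)
  moreover have "subtree_join {a, b} ` rooted_subtree_pairs V E a b =
      {T \<in> subtrees V (insert {a, b} E). {a, b} \<in> snd T}"
    using bij_betw_subtree_join[OF assms] by (rule bij_betw_imp_surj_on)
  ultimately show ?thesis by simp
qed

lemma card_subtrees_insert_edge:
  assumes ab: "a \<noteq> b" and e: "{a, b} \<notin> E" and doubletons: "\<forall>f\<in>E. \<exists>x y. f = {x, y}"
    and fin: "finite V" "finite E"
  shows "card (subtrees_containing V (insert {a, b} E) R) =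
         card (subtrees_containing V E R) +
         card {p \<in> rooted_subtree_pairs V E a b. R \<subseteq> fst (fst p) \<union> fst (snd p)}"
proof -
  let ?through = "{T \<in> {T \<in> subtrees V (insert {a, b} E). {a, b} \<in> snd T}. R \<subseteq> fst T}"
  have split: "subtrees_containing V (insert {a, b} E) R = subtrees_containing V E R \<union> ?through"
    unfolding subtrees_containing_def subtrees_def by auto
  have disj: "subtrees_containing V E R \<inter> ?through = {}"
    using e unfolding subtrees_containing_def subtrees_def by auto
  have fin_all: "finite (subtrees_containing V (insert {a, b} E) R)"
    using fin by (simp add: finite_subtrees_containing)
  have "bij_betw (subtree_join {a, b})
          {p \<in> rooted_subtree_pairs V E a b. R \<subseteq> fst (fst p) \<union> fst (snd p)} ?through"
    by (rule bij_betw_Collect[OF bij_betw_subtree_join[OF ab e doubletons]])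
       (simp add: subtree_join_def)
  then have "card ?through = card {p \<in> rooted_subtree_pairs V E a b. R \<subseteq> fst (fst p) \<union> fst (snd p)}"
    by (simp add: bij_betw_same_card)
  moreover have "card (subtrees_containing V (insert {a, b} E) R) =
      card (subtrees_containing V E R) + card ?through"
    using card_Un_disjoint[OF _ _ disj] fin_all unfolding split by simp
  ultimately show ?thesis by simp
qed

lemma subtree_of_Un_side:
  assumes T: "T \<in> subtrees (VA \<union> VB) (EA \<union> EB)" and disj: "VA \<inter> VB = {}"
    and EA: "\<forall>f\<in>EA. f \<subseteq> VA" and EB: "\<forall>f\<in>EB. f \<subseteq> VB" and ne: "{} \<notin> EB"
    and v: "v \<in> fst T" "v \<in> VA"
  shows "T \<in> subtrees VA EA"
proof -
  obtain V' E' where TT: "T = (V', E')" by fastforce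
  have con: "graph_connected V' E'" and E': "E' \<subseteq> EA \<union> EB" and sub: "\<forall>f\<in>E'. f \<subseteq> V'"
    using T TT by (auto simp: subtrees_def is_tree_def)
  have "V' \<subseteq> VA"
  proof
    fix u assume "u \<in> V'"
    then have "reach E' v u" using con v TT unfolding graph_connected_def by simp
    then have "reach (EA \<union> EB) v u" using E' by (rule reach_mono)
    then show "u \<in> VA" using reach_Un_stays[OF disj EA EB _ v(2)] by blast
  qed
  moreover have "E' \<subseteq> EA"
  proof
    fix f assume f: "f \<in> E'"
    show "f \<in> EA"
    proof (rule ccontr)
      assume "f \<notin> EA"
      then have "f \<in> EB" using f E' by blast
      then have "f \<subseteq> VB" "f \<noteq> {}" using EB ne by auto
      moreover have "f \<subseteq> VA" using f sub \<open>V' \<subseteq> VA\<close> by blast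
      ultimately show False using disj by blast
    qed
  qed
  ultimately show ?thesis using T TT unfolding subtrees_def by auto
qed

lemma subtrees_Un:
  assumes disj: "VA \<inter> VB = {}" and EA: "\<forall>f\<in>EA. f \<subseteq> VA" and EB: "\<forall>f\<in>EB. f \<subseteq> VB"
    and neA: "{} \<notin> EA" and neB: "{} \<notin> EB"
  shows "subtrees (VA \<union> VB) (EA \<union> EB) = subtrees VA EA \<union> subtrees VB EB"
proof
  show "subtrees (VA \<union> VB) (EA \<union> EB) \<subseteq> subtrees VA EA \<union> subtrees VB EB"
  proof
    fix T assume T: "T \<in> subtrees (VA \<union> VB) (EA \<union> EB)"
    then obtain v where v: "v \<in> fst T" by (auto simp: subtrees_def)
    then have "v \<in> VA \<or> v \<in> VB" using T subtree_vertices_subset by blast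
    moreover have "T \<in> subtrees VA EA" if "v \<in> VA"
      using subtree_of_Un_side[OF T disj EA EB neB v that] .
    moreover have "T \<in> subtrees VB EB" if "v \<in> VB"
    proof -
      have "T \<in> subtrees (VB \<union> VA) (EB \<union> EA)" using T by (simp add: Un_commute)
      moreover have "VB \<inter> VA = {}" using disj by blast
      ultimately show ?thesis using subtree_of_Un_side[OF _ _ EB EA neA v that] by blast
    qed
    ultimately show "T \<in> subtrees VA EA \<union> subtrees VB EB" by blast
  qed
  show "subtrees VA EA \<union> subtrees VB EB \<subseteq> subtrees (VA \<union> VB) (EA \<union> EB)"
    using subtrees_mono[of VA "VA \<union> VB" EA "EA \<union> EB"] subtrees_mono[of VB "VA \<union> VB" EB "EA \<union> EB"]
    by blast
qed

lemma rooted_subtree_pairs_Un: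
  assumes disj: "VA \<inter> VB = {}" and EA: "\<forall>f\<in>EA. f \<subseteq> VA" and EB: "\<forall>f\<in>EB. f \<subseteq> VB"
    and neA: "{} \<notin> EA" and neB: "{} \<notin> EB" and a: "a \<in> VA" and b: "b \<in> VB"
  shows "rooted_subtree_pairs (VA \<union> VB) (EA \<union> EB) a b =
         subtrees_containing VA EA {a} \<times> subtrees_containing VB EB {b}"
proof (intro set_eqI iffI)
  fix p assume "p \<in> rooted_subtree_pairs (VA \<union> VB) (EA \<union> EB) a b"
  then obtain T1 T2 where p: "p = (T1, T2)" and "a \<in> fst T1" "b \<in> fst T2"
    and "T1 \<in> subtrees VA EA \<union> subtrees VB EB" "T2 \<in> subtrees VA EA \<union> subtrees VB EB"
    unfolding rooted_subtree_pairs_def subtrees_Un[OF disj EA EB neA neB] by blast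
  moreover have "T1 \<notin> subtrees VB EB" using \<open>a \<in> fst T1\<close> subtree_vertices_subset a disj by blast
  moreover have "T2 \<notin> subtrees VA EA" using \<open>b \<in> fst T2\<close> subtree_vertices_subset b disj by blast
  ultimately show "p \<in> subtrees_containing VA EA {a} \<times> subtrees_containing VB EB {b}"
    unfolding subtrees_containing_def by blast
next
  fix p assume "p \<in> subtrees_containing VA EA {a} \<times> subtrees_containing VB EB {b}"
  then obtain T1 T2 where p: "p = (T1, T2)" and "a \<in> fst T1" "b \<in> fst T2"
    and T1: "T1 \<in> subtrees VA EA" and T2: "T2 \<in> subtrees VB EB"
    unfolding subtrees_containing_def by blast
  moreover have "fst T1 \<inter> fst T2 = {}"
    using subtree_vertices_subset[OF T1] subtree_vertices_subset[OF T2] disj by blast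
  ultimately show "p \<in> rooted_subtree_pairs (VA \<union> VB) (EA \<union> EB) a b"
    unfolding rooted_subtree_pairs_def subtrees_Un[OF disj EA EB neA neB] by blast
qed

lemma rooted_subtree_pairs_Un_containing:
  assumes disj: "VA \<inter> VB = {}" and EA: "\<forall>f\<in>EA. f \<subseteq> VA" and EB: "\<forall>f\<in>EB. f \<subseteq> VB"
    and neA: "{} \<notin> EA" and neB: "{} \<notin> EB" and a: "a \<in> VA" and b: "b \<in> VB"
    and R: "R \<subseteq> VB"
  shows "{p \<in> rooted_subtree_pairs (VA \<union> VB) (EA \<union> EB) a b. R \<subseteq> fst (fst p) \<union> fst (snd p)} =
    subtrees_containing VA EA {a} \<times> subtrees_containing VB EB (insert b R)"
  (is "?pairs = ?product")
proof (intro set_eqI iffI)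
  fix p assume "p \<in> ?pairs"
  then obtain T1 T2 where p: "p = (T1, T2)" "R \<subseteq> fst T1 \<union> fst T2"
    and T1: "T1 \<in> subtrees_containing VA EA {a}" and T2: "T2 \<in> subtrees_containing VB EB {b}"
    unfolding rooted_subtree_pairs_Un[OF disj EA EB neA neB a b] by auto
  have "fst T1 \<subseteq> VA" using T1 subtree_vertices_subset unfolding subtrees_containing_def by blast
  then have "R \<subseteq> fst T2" using p(2) R disj by blast
  then show "p \<in> ?product" using p T1 T2 unfolding subtrees_containing_def by auto
next
  fix p assume "p \<in> ?product"
  then show "p \<in> ?pairs"
    unfolding rooted_subtree_pairs_Un[OF disj EA EB neA neB a b] subtrees_containing_def by auto
qed

lemma card_subtrees_bridge:
  assumes disj: "VA \<inter> VB = {}" and EA: "\<forall>f\<in>EA. f \<subseteq> VA" and EB: "\<forall>f\<in>EB. f \<subseteq> VB"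
    and dA: "\<forall>f\<in>EA. \<exists>x y. f = {x, y}" and dB: "\<forall>f\<in>EB. \<exists>x y. f = {x, y}"
    and a: "a \<in> VA" and b: "b \<in> VB"
    and fin: "finite VA" "finite VB" "finite EA" "finite EB" and R: "R \<subseteq> VB"
  shows "card (subtrees_containing (VA \<union> VB) (insert {a, b} (EA \<union> EB)) R) =
         card (subtrees_containing VA EA R) + card (subtrees_containing VB EB R) +
         card (subtrees_containing VA EA {a}) * card (subtrees_containing VB EB (insert b R))"
proof -
  have neA: "{} \<notin> EA" and neB: "{} \<notin> EB" using dA dB by auto
  have "\<not> {a, b} \<subseteq> VA" "\<not> {a, b} \<subseteq> VB" using a b disj by auto
  then have e: "{a, b} \<notin> EA \<union> EB" using EA EB by auto
  have ab: "a \<noteq> b" using a b disj by blast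
  have insert: "card (subtrees_containing (VA \<union> VB) (insert {a, b} (EA \<union> EB)) R) =
      card (subtrees_containing (VA \<union> VB) (EA \<union> EB) R) +
      card {p \<in> rooted_subtree_pairs (VA \<union> VB) (EA \<union> EB) a b. R \<subseteq> fst (fst p) \<union> fst (snd p)}"
    by (rule card_subtrees_insert_edge[OF ab e]) (use dA dB fin in auto)
  have "subtrees_containing (VA \<union> VB) (EA \<union> EB) R =
        subtrees_containing VA EA R \<union> subtrees_containing VB EB R"
    unfolding subtrees_containing_def subtrees_Un[OF disj EA EB neA neB] by blast
  moreover have "subtrees_containing VA EA R \<inter> subtrees_containing VB EB R = {}"
    using disj unfolding subtrees_containing_def subtrees_def by auto
  ultimately have union: "card (subtrees_containing (VA \<union> VB) (EA \<union> EB) R) =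
      card (subtrees_containing VA EA R) + card (subtrees_containing VB EB R)"
    using fin by (simp add: card_Un_disjoint finite_subtrees_containing)
  show ?thesis
    unfolding insert union rooted_subtree_pairs_Un_containing[OF disj EA EB neA neB a b R]
    by (simp add: card_cartesian_product)
qed

section \<open>Subtrees of paths and hexagons\<close>

definition path_vertices :: "nat \<Rightarrow> nat \<Rightarrow> (nat \<times> nat) set" where
  "path_vertices i m = {(i, j) | j. j < m}"

definition path_edges :: "nat \<Rightarrow> nat \<Rightarrow> (nat \<times> nat) set set" where
  "path_edges i m = {{(i, j), (i, Suc j)} | j. Suc j < m}"

definition segment :: "nat \<Rightarrow> nat \<Rightarrow> nat \<Rightarrow> (nat \<times> nat) set \<times> (nat \<times> nat) set set" where
  "segment i s t = ({(i, j) | j. s \<le> j \<and> j \<le> t}, {{(i, j), (i, Suc j)} | j. s \<le> j \<and> j < t})"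

lemma mem_fst_segment [simp]: "(i', j) \<in> fst (segment i s t) \<longleftrightarrow> i' = i \<and> s \<le> j \<and> j \<le> t"
  unfolding segment_def by auto

lemma segment_singleton: "segment i m m = ({(i, m)}, {})"
  unfolding segment_def by auto

lemma segment_eq_iff:
  assumes "s \<le> t" "s' \<le> t'"
  shows "segment i s t = segment i s' t' \<longleftrightarrow> s = s' \<and> t = t'"
proof
  assume "segment i s t = segment i s' t'"
  then have "(i, j) \<in> fst (segment i s t) \<longleftrightarrow> (i, j) \<in> fst (segment i s' t')" for j by simp
  then have "s \<le> j \<and> j \<le> t \<longleftrightarrow> s' \<le> j \<and> j \<le> t'" for j by simp
  then show "s = s' \<and> t = t'" using assms by (metis le_antisym order_refl)
qed simp

lemma subtree_join_segments:
  "s \<le> k \<Longrightarrow> subtree_join {(i, k), (i, Suc k)} (segment i s k, segment i (Suc k) (Suc k)) =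
     segment i s (Suc k)"
  unfolding subtree_join_def segment_def by (auto simp: le_Suc_eq less_Suc_eq)

lemma path_vertices_Suc: "path_vertices i (Suc m) = path_vertices i m \<union> {(i, m)}"
  unfolding path_vertices_def by (auto simp: less_Suc_eq)

lemma path_edges_Suc_Suc:
  "path_edges i (Suc (Suc k)) = insert {(i, k), (i, Suc k)} (path_edges i (Suc k))"
  unfolding path_edges_def by (auto simp: less_Suc_eq)

lemma path_edges_within: "\<forall>f\<in>path_edges i m. f \<subseteq> path_vertices i m"
  unfolding path_edges_def path_vertices_def by auto

lemma path_edges_doubletons: "\<forall>f\<in>path_edges i m. \<exists>x y. f = {x, y}"
  unfolding path_edges_def by auto

lemma finite_path_vertices: "finite (path_vertices i m)"
  unfolding path_vertices_def by (rule finite_subset[of _ "{i} \<times> {..<m}"]) auto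

lemma finite_path_edges: "finite (path_edges i m)"
proof -
  have "path_edges i m \<subseteq> (\<lambda>j. {(i, j), (i, Suc j)}) ` {..<m}" unfolding path_edges_def by auto
  then show ?thesis by (rule finite_subset) simp
qed

lemma path_subtrees_Suc_Suc:
  assumes IH: "subtrees (path_vertices i (Suc k)) (path_edges i (Suc k)) =
      case_prod (segment i) ` {(s, t). s \<le> t \<and> t < Suc k}"
  shows "subtrees (path_vertices i (Suc (Suc k))) (path_edges i (Suc (Suc k))) =
      case_prod (segment i) ` {(s, t). s \<le> t \<and> t < Suc (Suc k)}"
proof -
  let ?V = "path_vertices i (Suc k)" and ?E = "path_edges i (Suc k)" and ?new = "(i, Suc k)"
  have disj: "?V \<inter> {?new} = {}" unfolding path_vertices_def by simp
  have E: "\<forall>f\<in>?E. f \<subseteq> ?V" "{} \<notin> ?E" using path_edges_within path_edges_doubletons by blast+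
  have no_edges: "\<forall>f\<in>{}. f \<subseteq> {?new}" "{} \<notin> {}" by simp_all
  have old: "subtrees (?V \<union> {?new}) (?E \<union> {}) =
      case_prod (segment i) ` {(s, t). s \<le> t \<and> t < Suc k} \<union> {segment i (Suc k) (Suc k)}"
    unfolding subtrees_Un[OF disj E(1) no_edges(1) E(2) no_edges(2)] IH subtrees_singleton
      segment_singleton ..
  have "subtrees_containing ?V ?E {(i, k)} = (\<lambda>s. segment i s k) ` {..k}"
    unfolding subtrees_containing_def IH by (force simp: less_Suc_eq_le)
  moreover have "subtrees_containing {?new} {} {?new} = {segment i (Suc k) (Suc k)}"
    unfolding subtrees_containing_def subtrees_singleton segment_singleton by auto
  ultimately have pairs: "rooted_subtree_pairs (?V \<union> {?new}) (?E \<union> {}) (i, k) ?new =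
      (\<lambda>s. (segment i s k, segment i (Suc k) (Suc k))) ` {..k}"
    using rooted_subtree_pairs_Un[OF disj E(1) no_edges(1) E(2) no_edges(2), of "(i, k)" ?new]
    by (auto simp: path_vertices_def)
  have "{(i, k), ?new} \<notin> ?E \<union> {}" using E(1) disj by blast
  then have "subtrees (path_vertices i (Suc (Suc k))) (path_edges i (Suc (Suc k))) =
      subtrees (?V \<union> {?new}) (?E \<union> {}) \<union>
      subtree_join {(i, k), ?new} ` rooted_subtree_pairs (?V \<union> {?new}) (?E \<union> {}) (i, k) ?new"
    using subtrees_insert_edge[of "(i, k)" ?new "?E \<union> {}"] path_edges_doubletons
    by (simp add: path_vertices_Suc path_edges_Suc_Suc)
  also have "\<dots> = case_prod (segment i) ` {(s, t). s \<le> t \<and> t < Suc k} \<union>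
      {segment i (Suc k) (Suc k)} \<union> (\<lambda>s. segment i s (Suc k)) ` {..k}"
    unfolding old pairs image_image using subtree_join_segments by simp
  also have "\<dots> = case_prod (segment i) ` {(s, t). s \<le> t \<and> t < Suc (Suc k)}"
  proof -
    have "{(s, t). s \<le> t \<and> t < Suc (Suc k)} =
        {(s, t). s \<le> t \<and> t < Suc k} \<union> {(Suc k, Suc k)} \<union> (\<lambda>s. (s, Suc k)) ` {..k}"
      by (auto simp: less_Suc_eq image_iff le_Suc_eq)
    then show ?thesis by (simp add: image_Un image_image)
  qed
  finally show ?thesis .
qed

lemma path_subtrees:
  "subtrees (path_vertices i m) (path_edges i m) = case_prod (segment i) ` {(s, t). s \<le> t \<and> t < m}"
proof (induction m rule: nat_less_induct)
  case (1 m)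
  consider "m = 0" | "m = Suc 0" | k where "m = Suc (Suc k)" by (metis not0_implies_Suc)
  then show ?case
  proof cases
    case 1
    then show ?thesis by (simp add: path_vertices_def subtrees_def)
  next
    case 2
    have "path_vertices i (Suc 0) = {(i, 0)}" "path_edges i (Suc 0) = {}"
      "{(s, t). s \<le> t \<and> t < Suc 0} = {(0, 0)}"
      unfolding path_vertices_def path_edges_def by auto
    then show ?thesis using 2 by (simp add: subtrees_singleton segment_singleton)
  next
    case (3 k)
    then show ?thesis using path_subtrees_Suc_Suc "1.IH" by simp
  qed
qed

definition hexagon_edges :: "nat \<Rightarrow> (nat \<times> nat) set set" where
  "hexagon_edges i = {{(i, j), (i, (j + 1) mod 6)} | j. j < 6}"

lemma hexagon_edges_eq: "hexagon_edges i = insert {(i, 0), (i, 5)} (path_edges i 6)"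
proof -
  have "{j. j < (6::nat)} = {0, 1, 2, 3, 4, 5}" "{j. Suc j < (6::nat)} = {0, 1, 2, 3, 4}" by auto
  then have "hexagon_edges i = (\<lambda>j. {(i, j), (i, (j + 1) mod 6)}) ` {0, 1, 2, 3, 4, 5}"
    "path_edges i 6 = (\<lambda>j. {(i, j), (i, Suc j)}) ` {0, 1, 2, 3, 4}"
    unfolding hexagon_edges_def path_edges_def by blast+
  moreover have "{(i, 5::nat), (i, 0)} = {(i, 0), (i, 5)}" by blast
  ultimately show ?thesis by (simp add: insert_commute)
qed

lemma rooted_subtree_pairs_path_ends:
  "rooted_subtree_pairs (path_vertices i (Suc m)) (path_edges i (Suc m)) (i, 0) (i, m) =
     (\<lambda>(t, s). (segment i 0 t, segment i s m)) ` {(t, s). t < s \<and> s \<le> m}"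
proof (intro set_eqI iffI)
  fix p assume "p \<in> rooted_subtree_pairs (path_vertices i (Suc m)) (path_edges i (Suc m)) (i, 0) (i, m)"
  then obtain s1 t1 s2 t2 where p: "p = (segment i s1 t1, segment i s2 t2)"
    and "s1 \<le> t1" "s2 \<le> t2" "t1 \<le> m" "t2 \<le> m"
    and ends: "(i, 0) \<in> fst (segment i s1 t1)" "(i, m) \<in> fst (segment i s2 t2)"
    and disj: "fst (segment i s1 t1) \<inter> fst (segment i s2 t2) = {}"
    unfolding rooted_subtree_pairs_def path_subtrees by auto
  then have "s1 = 0" "t2 = m" by auto
  moreover have "t1 < s2"
  proof (rule ccontr)
    assume "\<not> t1 < s2"
    then have "(i, s2) \<in> fst (segment i s1 t1) \<inter> fst (segment i s2 t2)"
      using \<open>s1 = 0\<close> \<open>s2 \<le> t2\<close> by simp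
    then show False using disj by blast
  qed
  ultimately show "p \<in> (\<lambda>(t, s). (segment i 0 t, segment i s m)) ` {(t, s). t < s \<and> s \<le> m}"
    using p \<open>t2 \<le> m\<close> \<open>s2 \<le> t2\<close> by force
next
  fix p assume "p \<in> (\<lambda>(t, s). (segment i 0 t, segment i s m)) ` {(t, s). t < s \<and> s \<le> m}"
  then obtain t s where p: "p = (segment i 0 t, segment i s m)" and "t < s" "s \<le> m" by auto
  then have "segment i 0 t \<in> subtrees (path_vertices i (Suc m)) (path_edges i (Suc m))"
    "segment i s m \<in> subtrees (path_vertices i (Suc m)) (path_edges i (Suc m))"
    unfolding path_subtrees by force+
  moreover have "fst (segment i 0 t) \<inter> fst (segment i s m) = {}"
    using \<open>t < s\<close> by (auto simp: segment_def)
  ultimately show "p \<in> rooted_subtree_pairs (path_vertices i (Suc m)) (path_edges i (Suc m)) (i, 0) (i, m)"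
    using p \<open>t < s\<close> \<open>s \<le> m\<close> unfolding rooted_subtree_pairs_def by simp
qed

lemma card_filter_image:
  assumes "inj_on f D"
  shows "card {x \<in> f ` D. Q x} = card {d \<in> D. Q (f d)}"
proof -
  have "{x \<in> f ` D. Q x} = f ` {d \<in> D. Q (f d)}" by blast
  moreover have "inj_on f {d \<in> D. Q (f d)}" using assms by (rule inj_on_subset) blast
  ultimately show ?thesis by (simp add: card_image)
qed

lemma card_pairs_below:
  "card {(s, t). s < m \<and> t < (m::nat) \<and> Q s t} = (\<Sum>s<m. \<Sum>t<m. if Q s t then 1 else 0)"
proof -
  have "{(s, t). s < m \<and> t < m \<and> Q s t} = (SIGMA s:{..<m}. {t. t < m \<and> Q s t})" by auto
  then have "card {(s, t). s < m \<and> t < m \<and> Q s t} = (\<Sum>s<m. card {t. t < m \<and> Q s t})"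
    by (simp add: card_SigmaI)
  also have "\<dots> = (\<Sum>s<m. \<Sum>t<m. if Q s t then 1 else 0)"
  proof (rule sum.cong[OF refl])
    fix s
    have "{t. t < m \<and> Q s t} = {..<m} \<inter> Collect (Q s)" by auto
    then show "card {t. t < m \<and> Q s t} = (\<Sum>t<m. if Q s t then 1 else 0)"
      by (simp add: sum.If_cases)
  qed
  finally show ?thesis .
qed

lemma card_path_subtrees_containing:
  "card (subtrees_containing (path_vertices i m) (path_edges i m) R) =
     card {(s, t). s < m \<and> t < m \<and> (s \<le> t \<and> R \<subseteq> fst (segment i s t))}"
proof -
  have "inj_on (case_prod (segment i)) {(s, t). s \<le> t \<and> t < m}"
    by (auto simp: inj_on_def segment_eq_iff)
  then have "card {T \<in> case_prod (segment i) ` {(s, t). s \<le> t \<and> t < m}. R \<subseteq> fst T} =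
      card {d \<in> {(s, t). s \<le> t \<and> t < m}. R \<subseteq> fst (case_prod (segment i) d)}"
    by (rule card_filter_image)
  moreover have "{d \<in> {(s, t). s \<le> t \<and> t < m}. R \<subseteq> fst (case_prod (segment i) d)} =
      {(s, t). s < m \<and> t < m \<and> (s \<le> t \<and> R \<subseteq> fst (segment i s t))}"
    by auto
  ultimately show ?thesis by (simp add: subtrees_containing_def path_subtrees)
qed

lemma card_path_end_pairs_containing:
  "card {p \<in> rooted_subtree_pairs (path_vertices i (Suc m)) (path_edges i (Suc m)) (i, 0) (i, m).
       R \<subseteq> fst (fst p) \<union> fst (snd p)} =
     card {(t, s). t < Suc m \<and> s < Suc m \<and>
       (t < s \<and> R \<subseteq> fst (segment i 0 t) \<union> fst (segment i s m))}"
proof -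
  let ?f = "\<lambda>(t, s). (segment i 0 t, segment i s m)"
  have "inj_on ?f {(t, s). t < s \<and> s \<le> m}"
    by (auto simp: inj_on_def segment_eq_iff)
  then have "card {p \<in> ?f ` {(t, s). t < s \<and> s \<le> m}. R \<subseteq> fst (fst p) \<union> fst (snd p)} =
      card {d \<in> {(t, s). t < s \<and> s \<le> m}. R \<subseteq> fst (fst (?f d)) \<union> fst (snd (?f d))}"
    by (rule card_filter_image)
  moreover have "{d \<in> {(t, s). t < s \<and> s \<le> m}. R \<subseteq> fst (fst (?f d)) \<union> fst (snd (?f d))} =
      {(t, s). t < Suc m \<and> s < Suc m \<and> (t < s \<and> R \<subseteq> fst (segment i 0 t) \<union> fst (segment i s m))}"
    by auto
  ultimately show ?thesis by (simp only: rooted_subtree_pairs_path_ends)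
qed

text \<open>The hexagon is the path \<open>(i, 0), \<dots>, (i, 5)\<close> closed by the edge \<open>{(i, 0), (i, 5)}\<close>: its
  subtrees are the segments of the path and the joins of a segment starting at \<open>(i, 0)\<close> with a
  disjoint one ending at \<open>(i, 5)\<close>.\<close>

lemma card_hexagon_subtrees_containing:
  "card (subtrees_containing (path_vertices i 6) (hexagon_edges i) R) =
     (\<Sum>s<6. \<Sum>t<6. if s \<le> t \<and> R \<subseteq> fst (segment i s t) then 1 else 0) +
     (\<Sum>t<6. \<Sum>s<6. if t < s \<and> R \<subseteq> fst (segment i 0 t) \<union> fst (segment i s 5) then 1 else 0)"
proof -
  have "{(i, 0), (i, 5)} \<notin> path_edges i 6" by (auto simp: path_edges_def doubleton_eq_iff)
  then have "card (subtrees_containing (path_vertices i 6) (hexagon_edges i) R) =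
      card (subtrees_containing (path_vertices i 6) (path_edges i 6) R) +
      card {p \<in> rooted_subtree_pairs (path_vertices i 6) (path_edges i 6) (i, 0) (i, 5).
              R \<subseteq> fst (fst p) \<union> fst (snd p)}"
    unfolding hexagon_edges_eq
    by (intro card_subtrees_insert_edge path_edges_doubletons finite_path_vertices finite_path_edges) simp
  moreover have "Suc 5 = (6::nat)" by simp
  note ends = card_path_end_pairs_containing[of i 5 R, unfolded this]
  ultimately show ?thesis unfolding card_path_subtrees_containing ends card_pairs_below by simp
qed

lemma hexagon_subtrees: "card (subtrees_containing (path_vertices i 6) (hexagon_edges i) {}) = 36"
  unfolding card_hexagon_subtrees_containing by (simp add: lessThan_Suc numeral_eq_Suc)

lemma hexagon_subtrees_containing_vertex:
  assumes "j < 6"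
  shows "card (subtrees_containing (path_vertices i 6) (hexagon_edges i) {(i, j)}) = 21"
proof -
  have "j \<in> {0, 1, 2, 3, 4, 5}" using assms by auto
  then show ?thesis
    unfolding card_hexagon_subtrees_containing by (auto simp: lessThan_Suc numeral_eq_Suc)
qed

definition hexagon_pair_count :: "nat \<Rightarrow> nat" where
  "hexagon_pair_count d = (if d = 1 then 16 else if d = 2 then 13 else 12)"

lemma hexagon_subtrees_containing_pair:
  assumes "d \<in> {1, 2, 3}"
  shows "card (subtrees_containing (path_vertices i 6) (hexagon_edges i) {(i, 0), (i, d)}) =
    hexagon_pair_count d"
  using assms unfolding card_hexagon_subtrees_containing hexagon_pair_count_def
  by (auto simp: lessThan_Suc numeral_eq_Suc)

section \<open>Subtrees of polyphenylene chains\<close>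

lemma pc_vertices_Suc: "pc_vertices (Suc n) = pc_vertices n \<union> path_vertices n 6"
  unfolding pc_vertices_def path_vertices_def by (auto simp: less_Suc_eq)

lemma pc_vertices_one: "pc_vertices (Suc 0) = path_vertices 0 6"
  unfolding pc_vertices_def path_vertices_def by auto

lemma pc_edges_one: "pc_edges (Suc 0) ds = hexagon_edges 0"
  unfolding pc_edges_def hexagon_edges_def by auto

lemma pc_edges_image:
  "pc_edges n ds = (\<lambda>(i, j). {(i, j), (i, (j + 1) mod 6)}) ` ({..<n} \<times> {..<6}) \<union>
     (\<lambda>i. {(i, pc_exit ds i), (i + 1, 0)}) ` {..<n - 1}"
  unfolding pc_edges_def by auto

lemma pc_edges_Suc:
  assumes n: "n \<ge> 1" and agree: "\<forall>i. i + 1 < n \<longrightarrow> pc_exit ds' i = pc_exit ds i"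
  shows "pc_edges (Suc n) ds' =
    insert {(n - 1, pc_exit ds' (n - 1)), (n, 0)} (pc_edges n ds \<union> hexagon_edges n)"
proof -
  have "{..<Suc n} \<times> {..<6} = {..<n} \<times> {..<6} \<union> {n} \<times> {..<6::nat}" by auto
  moreover have "hexagon_edges n = (\<lambda>(i, j). {(i, j), (i, (j + 1) mod 6)}) ` ({n} \<times> {..<6})"
    unfolding hexagon_edges_def by auto
  moreover have "{..<Suc n - 1} = insert (n - 1) {..<n - 1}" using n by auto
  moreover have "n - 1 + 1 = n" using n by simp
  moreover have "(\<lambda>i. {(i, pc_exit ds' i), (i + 1, 0)}) ` {..<n - 1} =
      (\<lambda>i. {(i, pc_exit ds i), (i + 1, 0)}) ` {..<n - 1}"
    using agree by (intro image_cong) auto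
  ultimately show ?thesis unfolding pc_edges_image by (simp add: image_Un Un_ac)
qed

lemma pc_edges_within:
  assumes "\<forall>i. i + 1 < n \<longrightarrow> pc_exit ds i < 6"
  shows "\<forall>f\<in>pc_edges n ds. f \<subseteq> pc_vertices n"
  using assms unfolding pc_edges_def pc_vertices_def by auto

lemma pc_edges_doubletons: "\<forall>f\<in>pc_edges n ds. \<exists>x y. f = {x, y}"
  unfolding pc_edges_def by blast

lemma finite_pc_vertices: "finite (pc_vertices n)"
  unfolding pc_vertices_def by (rule finite_subset[of _ "{..<n} \<times> {..<6}"]) auto

lemma finite_pc_edges: "finite (pc_edges n ds)"
  unfolding pc_edges_image by simp

lemma hexagon_edges_within: "\<forall>f\<in>hexagon_edges i. f \<subseteq> path_vertices i 6"
  unfolding hexagon_edges_def path_vertices_def by auto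

lemma hexagon_edges_doubletons: "\<forall>f\<in>hexagon_edges i. \<exists>x y. f = {x, y}"
  unfolding hexagon_edges_def by blast

lemma finite_hexagon_edges: "finite (hexagon_edges i)"
  unfolding hexagon_edges_eq by (simp add: finite_path_edges)

definition chain_count :: "nat \<Rightarrow> nat list \<Rightarrow> (nat \<times> nat) set \<Rightarrow> nat" where
  "chain_count n ds R = card (subtrees_containing (pc_vertices n) (pc_edges n ds) R)"

lemma chain_count_Suc:
  assumes n: "n \<ge> 1" and agree: "\<forall>i. i + 1 < n \<longrightarrow> pc_exit ds' i = pc_exit ds i"
    and exits: "\<forall>i<n. pc_exit ds' i < 6" and R: "R \<subseteq> path_vertices n 6"
  shows "chain_count (Suc n) ds' R =
    chain_count n ds R + card (subtrees_containing (path_vertices n 6) (hexagon_edges n) R) +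
    chain_count n ds {(n - 1, pc_exit ds' (n - 1))} *
      card (subtrees_containing (path_vertices n 6) (hexagon_edges n) (insert (n, 0) R))"
proof -
  have "pc_vertices n \<inter> path_vertices n 6 = {}" unfolding pc_vertices_def path_vertices_def by auto
  moreover have "\<forall>f\<in>pc_edges n ds. f \<subseteq> pc_vertices n"
    using agree exits by (intro pc_edges_within) (metis Suc_eq_plus1 Suc_lessD)
  moreover have "(n - 1, pc_exit ds' (n - 1)) \<in> pc_vertices n" "(n, 0) \<in> path_vertices n 6"
    using n exits unfolding pc_vertices_def path_vertices_def by auto
  ultimately show ?thesis
    unfolding chain_count_def pc_vertices_Suc pc_edges_Suc[OF n agree]
    using card_subtrees_bridge[OF _ _ hexagon_edges_within pc_edges_doubletons hexagon_edges_doubletons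
        _ _ finite_pc_vertices finite_path_vertices finite_pc_edges finite_hexagon_edges R]
    by simp
qed


lemma chain_count_outside:
  assumes "R \<subseteq> path_vertices n 6" and "R \<noteq> {}"
  shows "chain_count n ds R = 0"
proof -
  have "pc_vertices n \<inter> path_vertices n 6 = {}" unfolding pc_vertices_def path_vertices_def by auto
  then have "subtrees_containing (pc_vertices n) (pc_edges n ds) R = {}"
    using assms subtree_vertices_subset unfolding subtrees_containing_def by blast
  then show ?thesis unfolding chain_count_def by simp
qed

lemma chain_count_Suc_all:
  assumes "n \<ge> 1" "\<forall>i. i + 1 < n \<longrightarrow> pc_exit ds' i = pc_exit ds i" "\<forall>i<n. pc_exit ds' i < 6"
  shows "chain_count (Suc n) ds' {} =
    chain_count n ds {} + 36 + 21 * chain_count n ds {(n - 1, pc_exit ds' (n - 1))}"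
  using chain_count_Suc[OF assms, of "{}"] hexagon_subtrees hexagon_subtrees_containing_vertex[of 0 n]
  by simp

lemma chain_count_Suc_vertex:
  assumes "n \<ge> 1" "\<forall>i. i + 1 < n \<longrightarrow> pc_exit ds' i = pc_exit ds i" "\<forall>i<n. pc_exit ds' i < 6"
    and j: "j \<in> {1, 2, 3}"
  shows "chain_count (Suc n) ds' {(n, j)} =
    21 + hexagon_pair_count j * chain_count n ds {(n - 1, pc_exit ds' (n - 1))}"
proof -
  have R: "{(n, j)} \<subseteq> path_vertices n 6" using j unfolding path_vertices_def by auto
  have "chain_count n ds {(n, j)} = 0" using chain_count_outside[OF R] by simp
  moreover have "card (subtrees_containing (path_vertices n 6) (hexagon_edges n) {(n, j)}) = 21"
    using j by (intro hexagon_subtrees_containing_vertex) auto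
  moreover have "insert (n, 0) {(n, j)} = {(n, 0), (n, j)}" by simp
  ultimately show ?thesis
    using chain_count_Suc[OF assms(1-3) R] hexagon_subtrees_containing_pair[OF j] by simp
qed

lemma pc_exit_snoc:
  assumes "length ds = n - 2" and "n \<ge> 2"
  shows "\<forall>i. i + 1 < n \<longrightarrow> pc_exit (ds @ [d]) i = pc_exit ds i"
    and "pc_exit (ds @ [d]) (n - 1) = d"
  using assms by (auto simp: pc_exit_def nth_append)

lemma pc_exit_less_6:
  assumes "set ds \<subseteq> {1, 2, 3}" and "i \<le> length ds"
  shows "pc_exit ds i < 6"
proof (cases i)
  case (Suc k)
  then have "ds ! k \<in> set ds" using assms(2) by simp
  then have "ds ! k \<in> {1, 2, 3}" using assms(1) by blast
  then show ?thesis using Suc by (auto simp: pc_exit_def)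
qed (simp add: pc_exit_def)

lemma chain_count_snoc:
  assumes ds: "ds \<in> rpc_outcomes n" and n: "n \<ge> 2" and d: "d \<in> {1, 2, 3}"
  shows "chain_count (Suc n) (ds @ [d]) {} =
      chain_count n ds {} + 36 + 21 * chain_count n ds {(n - 1, d)}"
    and "j \<in> {1, 2, 3} \<Longrightarrow> chain_count (Suc n) (ds @ [d]) {(n, j)} =
      21 + hexagon_pair_count j * chain_count n ds {(n - 1, d)}"
proof -
  have len: "length ds = n - 2" and set: "set ds \<subseteq> {1, 2, 3}"
    using ds unfolding rpc_outcomes_def by auto
  have "\<forall>i<n. pc_exit (ds @ [d]) i < 6"
    using set d len n by (auto intro!: pc_exit_less_6)
  note step = pc_exit_snoc[OF len n] this
  show "chain_count (Suc n) (ds @ [d]) {} =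
      chain_count n ds {} + 36 + 21 * chain_count n ds {(n - 1, d)}"
    using chain_count_Suc_all[of n "ds @ [d]" ds] n step by simp
  show "chain_count (Suc n) (ds @ [d]) {(n, j)} =
      21 + hexagon_pair_count j * chain_count n ds {(n - 1, d)}" if "j \<in> {1, 2, 3}"
    using chain_count_Suc_vertex[of n "ds @ [d]" ds j] n step that by simp
qed

lemma chain_count_one: "chain_count (Suc 0) ds R =
    card (subtrees_containing (path_vertices 0 6) (hexagon_edges 0) R)"
  unfolding chain_count_def pc_vertices_one pc_edges_one ..

lemma chain_count_two:
  shows "chain_count 2 [] {} = 513"
    and "j \<in> {1, 2, 3} \<Longrightarrow> chain_count 2 [] {(1, j)} = 21 + hexagon_pair_count j * 21"
proof -
  have step: "1 \<le> Suc 0" "\<forall>i. i + 1 < Suc 0 \<longrightarrow> pc_exit [] i = pc_exit [] i"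
    "\<forall>i<Suc 0. pc_exit [] i < 6" by (simp_all add: pc_exit_def)
  have base: "chain_count (Suc 0) [] {} = 36" "chain_count (Suc 0) [] {(0, 0)} = 21"
    unfolding chain_count_one by (simp_all add: hexagon_subtrees hexagon_subtrees_containing_vertex)
  show "chain_count 2 [] {} = 513"
    using chain_count_Suc_all[OF step] base by (simp add: numeral_2_eq_2 pc_exit_def)
  show "chain_count 2 [] {(1, j)} = 21 + hexagon_pair_count j * 21" if "j \<in> {1, 2, 3}"
    using chain_count_Suc_vertex[OF step that] base by (simp add: numeral_2_eq_2 pc_exit_def)
qed

section \<open>Expected subtree numbers\<close>

definition outcome_prob :: "real \<Rightarrow> real \<Rightarrow> nat list \<Rightarrow> real" where
  "outcome_prob p1 p2 ds = (\<Prod>d\<leftarrow>ds. type_prob p1 p2 d)"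

text \<open>The expected number of subtrees of \<open>RPC(n)\<close> containing the vertex of \<open>H\<^sub>n\<close> to which
  \<open>H\<^sub>n\<^sub>+\<^sub>1\<close> is attached next: \<open>(n - 1, d)\<close>, at distance \<open>d\<close> from \<open>(n - 1, 0)\<close>, with
  probability \<^term>\<open>type_prob p1 p2 d\<close>.\<close>

definition expected_exit_count :: "nat \<Rightarrow> real \<Rightarrow> real \<Rightarrow> real" where
  "expected_exit_count n p1 p2 = (\<Sum>ds\<in>rpc_outcomes n. outcome_prob p1 p2 ds *
     (\<Sum>d\<in>{1, 2, 3}. type_prob p1 p2 d * real (chain_count n ds {(n - 1, d)})))"

lemma expected_STN_RPC_chain_count:
  "expected_STN_RPC n p1 p2 = (\<Sum>ds\<in>rpc_outcomes n. outcome_prob p1 p2 ds * real (chain_count n ds {}))"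
  unfolding expected_STN_RPC_def outcome_prob_def chain_count_def STN_def subtrees_containing_def
  by simp

lemma rpc_outcomes_Suc:
  assumes "n \<ge> 2"
  shows "rpc_outcomes (Suc n) = (\<lambda>(ds, d). ds @ [d]) ` (rpc_outcomes n \<times> {1, 2, 3})"
proof
  show "rpc_outcomes (Suc n) \<subseteq> (\<lambda>(ds, d). ds @ [d]) ` (rpc_outcomes n \<times> {1, 2, 3})"
  proof
    fix ds assume ds: "ds \<in> rpc_outcomes (Suc n)"
    then have "ds \<noteq> []" using assms unfolding rpc_outcomes_def by auto
    then have "ds = butlast ds @ [last ds]" by simp
    moreover have "butlast ds \<in> rpc_outcomes n"
      using ds unfolding rpc_outcomes_def by (auto dest: in_set_butlastD)
    moreover have "last ds \<in> {1, 2, 3}"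
      using ds last_in_set[OF \<open>ds \<noteq> []\<close>] unfolding rpc_outcomes_def by blast
    ultimately show "ds \<in> (\<lambda>(ds, d). ds @ [d]) ` (rpc_outcomes n \<times> {1, 2, 3})"
      by (metis (no_types, lifting) SigmaI case_prod_conv image_eqI)
  qed
  show "(\<lambda>(ds, d). ds @ [d]) ` (rpc_outcomes n \<times> {1, 2, 3}) \<subseteq> rpc_outcomes (Suc n)"
    using assms unfolding rpc_outcomes_def by auto
qed

lemma rpc_outcomes_one_two: "rpc_outcomes (Suc 0) = {[]}" "rpc_outcomes 2 = {[]}"
  unfolding rpc_outcomes_def by auto

lemma sum_rpc_outcomes_Suc:
  assumes "n \<ge> 2"
  shows "(\<Sum>ds\<in>rpc_outcomes (Suc n). outcome_prob p1 p2 ds * g ds) =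
    (\<Sum>ds\<in>rpc_outcomes n. outcome_prob p1 p2 ds * (\<Sum>d\<in>{1, 2, 3}. type_prob p1 p2 d * g (ds @ [d])))"
proof -
  have "inj_on (\<lambda>(ds, d). ds @ [d]) (rpc_outcomes n \<times> {1, 2, 3})" by (rule inj_onI) auto
  then have "(\<Sum>ds\<in>rpc_outcomes (Suc n). outcome_prob p1 p2 ds * g ds) =
      (\<Sum>(ds, d)\<in>rpc_outcomes n \<times> {1, 2, 3}. outcome_prob p1 p2 ds * (type_prob p1 p2 d * g (ds @ [d])))"
    by (rule sum.reindex_cong[OF _ rpc_outcomes_Suc[OF assms]]) (auto simp: outcome_prob_def)
  then show ?thesis by (simp only: sum_distrib_left sum.cartesian_product)
qed

lemma sum_weighted_affine:
  fixes w u y :: "'a \<Rightarrow> real"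
  shows "(\<Sum>x\<in>A. w x * (u x + a + b * y x)) =
    (\<Sum>x\<in>A. w x * u x) + a * sum w A + b * (\<Sum>x\<in>A. w x * y x)"
  by (simp add: distrib_left sum.distrib sum_distrib_left sum_distrib_right mult.commute mult.left_commute)

lemma sum_type_prob_affine:
  "(\<Sum>d\<in>{1, 2, 3}. type_prob p1 p2 d * (a + b * x d)) = a + b * (\<Sum>d\<in>{1, 2, 3}. type_prob p1 p2 d * x d)"
  by (simp add: type_prob_def algebra_simps)

lemma sum_type_prob_pair_count:
  "(\<Sum>d\<in>{1, 2, 3}. type_prob p1 p2 d * real (hexagon_pair_count d)) = 12 + 4 * p1 + p2"
  by (simp add: type_prob_def hexagon_pair_count_def algebra_simps)

lemma sum_outcome_prob:
  "n \<ge> 2 \<Longrightarrow> (\<Sum>ds\<in>rpc_outcomes n. outcome_prob p1 p2 ds) = 1"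
proof (induction n rule: nat_induct_at_least)
  case base
  show ?case by (simp add: rpc_outcomes_one_two outcome_prob_def)
next
  case (Suc n)
  then show ?case
    using sum_rpc_outcomes_Suc[OF Suc.hyps, of p1 p2 "\<lambda>_. 1"] sum_type_prob_affine[of p1 p2 1 0]
    by simp
qed

lemma expected_STN_RPC_Suc:
  assumes n: "n \<ge> 2"
  shows "expected_STN_RPC (Suc n) p1 p2 = expected_STN_RPC n p1 p2 + 36 + 21 * expected_exit_count n p1 p2"
proof -
  have step: "(\<Sum>d\<in>{1, 2, 3}. type_prob p1 p2 d * real (chain_count (Suc n) (ds @ [d]) {})) =
      real (chain_count n ds {}) + 36 +
      21 * (\<Sum>d\<in>{1, 2, 3}. type_prob p1 p2 d * real (chain_count n ds {(n - 1, d)}))"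
    if "ds \<in> rpc_outcomes n" for ds
  proof -
    have "(\<Sum>d\<in>{1, 2, 3}. type_prob p1 p2 d * real (chain_count (Suc n) (ds @ [d]) {})) =
        (\<Sum>d\<in>{1, 2, 3}. type_prob p1 p2 d *
          ((real (chain_count n ds {}) + 36) + 21 * real (chain_count n ds {(n - 1, d)})))"
      using chain_count_snoc(1)[OF that n] by (intro sum.cong) simp_all
    then show ?thesis by (simp only: sum_type_prob_affine)
  qed
  have "expected_STN_RPC (Suc n) p1 p2 = (\<Sum>ds\<in>rpc_outcomes n. outcome_prob p1 p2 ds *
      (real (chain_count n ds {}) + 36 +
        21 * (\<Sum>d\<in>{1, 2, 3}. type_prob p1 p2 d * real (chain_count n ds {(n - 1, d)}))))"
    unfolding expected_STN_RPC_chain_count sum_rpc_outcomes_Suc[OF n]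
    by (rule sum.cong[OF refl]) (simp only: step)
  also have "\<dots> = expected_STN_RPC n p1 p2 + 36 + 21 * expected_exit_count n p1 p2"
    unfolding sum_weighted_affine sum_outcome_prob[OF n] expected_STN_RPC_chain_count
      expected_exit_count_def by simp
  finally show ?thesis .
qed

lemma expected_exit_count_Suc:
  assumes n: "n \<ge> 2"
  shows "expected_exit_count (Suc n) p1 p2 = 21 + (12 + 4 * p1 + p2) * expected_exit_count n p1 p2"
proof -
  have pair: "(\<Sum>j\<in>{1, 2, 3}. type_prob p1 p2 j * real (chain_count (Suc n) (ds @ [d]) {(n, j)})) =
      21 + (12 + 4 * p1 + p2) * real (chain_count n ds {(n - 1, d)})"
    if "ds \<in> rpc_outcomes n" "d \<in> {1, 2, 3}" for ds d
  proof -
    have "(\<Sum>j\<in>{1, 2, 3}. type_prob p1 p2 j * real (chain_count (Suc n) (ds @ [d]) {(n, j)})) =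
        (\<Sum>j\<in>{1, 2, 3}. type_prob p1 p2 j *
          (21 + real (chain_count n ds {(n - 1, d)}) * real (hexagon_pair_count j)))"
      using chain_count_snoc(2)[OF that(1) n that(2)] by (intro sum.cong) simp_all
    then show ?thesis by (simp add: type_prob_def hexagon_pair_count_def algebra_simps)
  qed
  have step: "(\<Sum>d\<in>{1, 2, 3}. type_prob p1 p2 d *
        (\<Sum>j\<in>{1, 2, 3}. type_prob p1 p2 j * real (chain_count (Suc n) (ds @ [d]) {(Suc n - 1, j)}))) =
      21 + (12 + 4 * p1 + p2) *
        (\<Sum>d\<in>{1, 2, 3}. type_prob p1 p2 d * real (chain_count n ds {(n - 1, d)}))"
    if "ds \<in> rpc_outcomes n" for ds
    using pair[OF that] sum_type_prob_affine[of p1 p2 21 "12 + 4 * p1 + p2"] by simp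
  have "expected_exit_count (Suc n) p1 p2 = (\<Sum>ds\<in>rpc_outcomes n. outcome_prob p1 p2 ds *
      (21 + (12 + 4 * p1 + p2) *
        (\<Sum>d\<in>{1, 2, 3}. type_prob p1 p2 d * real (chain_count n ds {(n - 1, d)}))))"
    unfolding expected_exit_count_def sum_rpc_outcomes_Suc[OF n]
    by (rule sum.cong[OF refl]) (simp only: step)
  also have "\<dots> = 21 + (12 + 4 * p1 + p2) * expected_exit_count n p1 p2"
    unfolding sum_weighted_affine[where u = "\<lambda>_. 0", simplified] sum_outcome_prob[OF n]
      expected_exit_count_def by simp
  finally show ?thesis .
qed

lemma expected_counts_base:
  shows "expected_STN_RPC (Suc 0) p1 p2 = 36"
    and "expected_STN_RPC 2 p1 p2 = 513"
    and "expected_exit_count 2 p1 p2 = 21 + 21 * (12 + 4 * p1 + p2)"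
proof -
  show "expected_STN_RPC (Suc 0) p1 p2 = 36"
    unfolding expected_STN_RPC_chain_count rpc_outcomes_one_two chain_count_one
    by (simp add: outcome_prob_def hexagon_subtrees)
  show "expected_STN_RPC 2 p1 p2 = 513"
    unfolding expected_STN_RPC_chain_count rpc_outcomes_one_two by (simp add: outcome_prob_def chain_count_two)
  have "expected_exit_count 2 p1 p2 =
      (\<Sum>d\<in>{1, 2, 3}. type_prob p1 p2 d * real (chain_count 2 [] {(2 - 1, d)}))"
    unfolding expected_exit_count_def rpc_outcomes_one_two by (simp add: outcome_prob_def)
  also have "\<dots> = (\<Sum>d\<in>{1, 2, 3}. type_prob p1 p2 d * (21 + 21 * real (hexagon_pair_count d)))"
  proof (rule sum.cong[OF refl])
    fix d :: nat assume "d \<in> {1, 2, 3}"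
    then show "type_prob p1 p2 d * real (chain_count 2 [] {(2 - 1, d)}) =
        type_prob p1 p2 d * (21 + 21 * real (hexagon_pair_count d))"
      using chain_count_two(2) by simp
  qed
  also have "\<dots> = 21 + 21 * (12 + 4 * p1 + p2)"
    by (simp only: sum_type_prob_affine sum_type_prob_pair_count)
  finally show "expected_exit_count 2 p1 p2 = 21 + 21 * (12 + 4 * p1 + p2)" .
qed

lemma expected_counts_closed_form:
  fixes p1 p2 r :: real
  assumes r: "r = 11 + 4 * p1 + p2" "r \<noteq> 0" and n: "n \<ge> 2"
  shows "expected_exit_count n p1 p2 = 21 * ((r + 1) ^ n - 1) / r"
    and "expected_STN_RPC n p1 p2 = 441 / r\<^sup>2 * (r + 1) ^ n + (36 * r - 441) / r * real n - 441 / r\<^sup>2"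
proof -
  have rate: "12 + 4 * p1 + p2 = r + 1" using r by simp
  have exit: "expected_exit_count n p1 p2 = 21 * ((r + 1) ^ n - 1) / r" if "n \<ge> 2" for n
    using that
  proof (induction n rule: nat_induct_at_least)
    case base
    then show ?case
      using r(2) expected_counts_base(3)[of p1 p2, unfolded rate]
      by (simp add: field_simps power2_eq_square)
  next
    case (Suc n)
    have "expected_exit_count (Suc n) p1 p2 = 21 + (r + 1) * expected_exit_count n p1 p2"
      using expected_exit_count_Suc[OF Suc.hyps, of p1 p2] rate by simp
    then show ?case using Suc.IH r(2) by (simp add: field_simps)
  qed
  then show "expected_exit_count n p1 p2 = 21 * ((r + 1) ^ n - 1) / r" using n .
  show "expected_STN_RPC n p1 p2 = 441 / r\<^sup>2 * (r + 1) ^ n + (36 * r - 441) / r * real n - 441 / r\<^sup>2"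
    using n
  proof (induction n rule: nat_induct_at_least)
    case base
    then show ?case using r(2) by (simp add: expected_counts_base field_simps power2_eq_square)
  next
    case (Suc n)
    have "expected_STN_RPC (Suc n) p1 p2 =
        (441 / r\<^sup>2 * (r + 1) ^ n + (36 * r - 441) / r * real n - 441 / r\<^sup>2) + 36 +
        21 * (21 * ((r + 1) ^ n - 1) / r)"
      using expected_STN_RPC_Suc[OF Suc.hyps] Suc.IH exit[OF Suc.hyps] by simp
    also have "\<dots> = 441 / r\<^sup>2 * (r + 1) ^ Suc n + (36 * r - 441) / r * real (Suc n) - 441 / r\<^sup>2"
      using r(2) by (simp add: field_simps power2_eq_square)
    finally show ?case .
  qed
qed

theorem theorem4:
  fixes p1 p2 :: real and n :: nat
  assumes "p1 \<ge> 0" and "p2 \<ge> 0" and "p1 + p2 \<le> 1" and "n \<ge> 1"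
  shows "expected_STN_RPC n p1 p2 =
           441 / (11 + 4 * p1 + p2)^2 * (12 + 4 * p1 + p2) ^ n
         + (144 * p1 + 36 * p2 - 45) / (11 + 4 * p1 + p2) * real n
         - 441 / (11 + 4 * p1 + p2)^2"
proof -
  define r where "r = 11 + 4 * p1 + p2"
  have r0: "r \<noteq> 0" using assms(1,2) unfolding r_def by linarith
  have eqs: "11 + 4 * p1 + p2 = r" "12 + 4 * p1 + p2 = r + 1" "144 * p1 + 36 * p2 - 45 = 36 * r - 441"
    unfolding r_def by simp_all
  have "expected_STN_RPC n p1 p2 =
      441 / r\<^sup>2 * (r + 1) ^ n + (36 * r - 441) / r * real n - 441 / r\<^sup>2"
  proof (cases "n = 1")
    case True
    then show ?thesis using r0 by (simp add: expected_counts_base field_simps power2_eq_square)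
  next
    case False
    then show ?thesis using expected_counts_closed_form(2)[OF r_def r0] assms(4) by simp
  qed
  then show ?thesis unfolding eqs .
qed

end
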